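(* For $\lambda\in\Lambda$ let $E_\lambda$ be a congruence on $\overline{\boldsymbol{T}(X_1,\ldots,X_n)}$, and let $E$ be the congruence generated by $\bigcup_{\lambda\in\Lambda}E_\lambda$. Let $F_1,F_2$ be congruences on $\overline{\boldsymbol{T}(X_1,\ldots,X_n)}$. Then: (1) $\boldsymbol{V}(\Delta)=\mathbb{R}^n$ and $\boldsymbol{V}\big(\overline{\boldsymbol{T}(X_1,\ldots,X_n)}\times\overline{\boldsymbol{T}(X_1,\ldots,X_n)}\big)=\varnothing$; (2) $\boldsymbol{V}(E)=\bigcap_{\lambda\in\Lambda}\boldsymbol{V}(E_\lambda)$; (3) $\boldsymbol{V}(F_1\rtimes F_2)=\boldsymbol{V}(F_1)\cup\boldsymbol{V}(F_2)$.
   Context: $\boldsymbol{T}=\mathbb{R}\cup\{-\infty\}$ with $a\oplus b=\max\{a,b\}$, $a\odot b=a+b$. $\overline{\boldsymbol{T}[X_1,\ldots,X_n]}$ is the tropical polynomial semiring modulo identifying polynomials defining the same function $\boldsymbol{T}^n\to\boldsymbol{T}$; it is cancellative and $\overline{\boldsymbol{T}(X_1,\ldots,X_n)}$ is its semifield of fractions. Each element defines a function $\mathbb{R}^n\to\boldsymbol{T}$ (quotients evaluated as differences); $-\infty$ is the constant $-\infty$, other elements are real valued. A congruence is an equivalence relation compatible with $\oplus$ and $\odot$; $\Delta$ is the diagonal (trivial congruence); the congruence generated by a set is the smallest congruence containing it. $\boldsymbol{V}(E)=\{x\in\mathbb{R}^n\mid f(x)=g(x)\ \forall(f,g)\in E\}$.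 The twisted product is $(f_1,f_2)\rtimes(g_1,g_2):=(f_1\odot g_1\oplus f_2\odot g_2,\ f_1\odot g_2\oplus f_2\odot g_1)$, and $F_1\rtimes F_2$ is the congruence generated by $\{a\rtimes b\mid a\in F_1,b\in F_2\}$. *)

theory Defs
  imports "HOL-Analysis.Analysis"
begin

text \<open>The tropical semifield T = R \<union> {-\<infinity>} is modelled inside ereal (the value +\<infinity>
never occurs); tropical addition is max, tropical multiplication is +.
Elements of the semiring of tropical polynomial functions and of its semifield of
fractions are represented by the functions R^n \<rightarrow> T they define (this map is
injective, so the quotient/fraction constructions are faithfully represented).
The number of variables n is the cardinality of the finite index type 'n.\<close>

type_synonym 'n tfun = "real^'n \<Rightarrow> ereal"
type_synonym 'n trel = "('n tfun \<times> 'n tfun) set"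

definition tadd :: "'n tfun \<Rightarrow> 'n tfun \<Rightarrow> 'n tfun" (infixl "\<oplus>\<^sub>t" 65) where
  "f \<oplus>\<^sub>t g = (\<lambda>x. max (f x) (g x))"

definition tmul :: "'n tfun \<Rightarrow> 'n tfun \<Rightarrow> 'n tfun" (infixl "\<odot>\<^sub>t" 70) where
  "f \<odot>\<^sub>t g = (\<lambda>x. f x + g x)"

definition tmonom :: "real \<Rightarrow> ('n::finite \<Rightarrow> nat) \<Rightarrow> 'n tfun" where
  "tmonom c a = (\<lambda>x. ereal (c + (\<Sum>i\<in>UNIV. real (a i) * x $ i)))"

text \<open>Tropical polynomial functions: the constant -\<infinity> (empty sum) or a finite
nonempty tropical sum of monomials.\<close>
definition tpoly :: "('n::finite) tfun set" where
  "tpoly = {\<lambda>x. -\<infinity>} \<union>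
     {f. \<exists>S :: (real \<times> ('n \<Rightarrow> nat)) set. finite S \<and> S \<noteq> {} \<and>
          f = (\<lambda>x. Max ((\<lambda>(c,a). tmonom c a x) ` S))}"

definition trat :: "('n::finite) tfun set" where
  "trat = {\<lambda>x. f x - g x | f g. f \<in> tpoly \<and> g \<in> tpoly \<and> g \<noteq> (\<lambda>x. -\<infinity>)}"

definition tcongruence :: "('n::finite) trel \<Rightarrow> bool" where
  "tcongruence C \<longleftrightarrow> C \<subseteq> trat \<times> trat \<and> refl_on trat C \<and> sym C \<and> trans C \<and>
     (\<forall>a b c. (a, b) \<in> C \<and> c \<in> trat \<longrightarrow> (a \<oplus>\<^sub>t c, b \<oplus>\<^sub>t c) \<in> C \<and> (a \<odot>\<^sub>t c, b \<odot>\<^sub>t c) \<in> C)"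

definition tcong_gen :: "('n::finite) trel \<Rightarrow> 'n trel" where
  "tcong_gen R = \<Inter>{C. tcongruence C \<and> R \<subseteq> C}"

definition tV :: "('n::finite) trel \<Rightarrow> (real^'n) set" where
  "tV E = {x. \<forall>(f, g) \<in> E. f x = g x}"

definition twist :: "'n tfun \<times> 'n tfun \<Rightarrow> 'n tfun \<times> 'n tfun \<Rightarrow> 'n tfun \<times> 'n tfun" where
  "twist p q = (case p of (f1, f2) \<Rightarrow> case q of (g1, g2) \<Rightarrow>
     (f1 \<odot>\<^sub>t g1 \<oplus>\<^sub>t f2 \<odot>\<^sub>t g2, f1 \<odot>\<^sub>t g2 \<oplus>\<^sub>t f2 \<odot>\<^sub>t g1))"

definition twisted_prod :: "('n::finite) trel \<Rightarrow> 'n trel \<Rightarrow> 'n trel" where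
  "twisted_prod F1 F2 = tcong_gen {twist a b | a b. a \<in> F1 \<and> b \<in> F2}"

end

theory Submission
  imports Defs
begin

text \<open>For a point x, the pairs of rational functions agreeing at x form a congruence, so the
congruence generated by a set R of pairs has the same variety as R; this gives (2) and reduces (3)
to the generating twisted products. Rational functions never take the value +\<infinity>, and for such
values max (f1 + g1) (f2 + g2) = max (f1 + g2) (f2 + g1) holds iff f1 = f2 or g1 = g2, which
gives (3). For (1), the constants 0 and -\<infinity> are rational functions that differ everywhere.\<close>

lemma Max_image_add_product:
  fixes f g :: "_ \<Rightarrow> 'a::{linorder, ordered_ab_semigroup_add}"
  assumes "finite S" "S \<noteq> {}" "finite T" "T \<noteq> {}"
  shows "Max ((\<lambda>(s, t). f s + g t) ` (S \<times> T)) = Max (f ` S) + Max (g ` T)"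
proof (rule Max_eqI)
  show "finite ((\<lambda>(s, t). f s + g t) ` (S \<times> T))"
    using assms by simp
next
  fix y assume "y \<in> (\<lambda>(s, t). f s + g t) ` (S \<times> T)"
  then show "y \<le> Max (f ` S) + Max (g ` T)"
    using assms by (auto intro!: add_mono)
next
  have "Max (f ` S) \<in> f ` S" "Max (g ` T) \<in> g ` T"
    using assms by simp_all
  then obtain s t where "s \<in> S" "Max (f ` S) = f s" "t \<in> T" "Max (g ` T) = g t"
    by blast
  then show "Max (f ` S) + Max (g ` T) \<in> (\<lambda>(s, t). f s + g t) ` (S \<times> T)"
    by force
qed

definition tmax_monoms :: "(real \<times> ('n::finite \<Rightarrow> nat)) set \<Rightarrow> 'n tfun" where
  "tmax_monoms S = (\<lambda>x. Max ((\<lambda>(c, a). tmonom c a x) ` S))"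

lemma tpoly_cases:
  assumes "f \<in> tpoly"
  obtains "f = (\<lambda>x. -\<infinity>)" | S where "finite S" "S \<noteq> {}" "f = tmax_monoms S"
  using assms unfolding tpoly_def tmax_monoms_def by auto

lemma tmax_monoms_in_tpoly: "finite S \<Longrightarrow> S \<noteq> {} \<Longrightarrow> tmax_monoms S \<in> tpoly"
  unfolding tpoly_def tmax_monoms_def by auto

lemma bot_in_tpoly: "(\<lambda>x. -\<infinity>) \<in> tpoly"
  unfolding tpoly_def by simp

lemma const_in_tpoly: "(\<lambda>x. ereal c) \<in> tpoly"
  using tmax_monoms_in_tpoly[of "{(c, \<lambda>_. 0)}"] by (simp add: tmax_monoms_def tmonom_def)

lemma tmax_monoms_finite:
  assumes "finite S" "S \<noteq> {}"
  shows "\<bar>tmax_monoms S x\<bar> \<noteq> \<infinity>"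
proof -
  have "tmax_monoms S x \<in> (\<lambda>(c, a). tmonom c a x) ` S"
    unfolding tmax_monoms_def using assms by (intro Max_in) auto
  then show ?thesis
    by (auto simp: tmonom_def)
qed

lemma tpoly_not_PInf:
  assumes "f \<in> tpoly"
  shows "f x \<noteq> \<infinity>"
  using assms
proof (cases rule: tpoly_cases)
  case (2 S)
  then show ?thesis
    using tmax_monoms_finite[of S x] by auto
qed simp

lemma tpoly_finite: "f \<in> tpoly \<Longrightarrow> f \<noteq> (\<lambda>x. -\<infinity>) \<Longrightarrow> \<bar>f x\<bar> \<noteq> \<infinity>"
  by (elim tpoly_cases) (simp_all add: tmax_monoms_finite)

lemma tmax_monoms_Un:
  assumes "finite S" "S \<noteq> {}" "finite T" "T \<noteq> {}"
  shows "tmax_monoms (S \<union> T) x = max (tmax_monoms S x) (tmax_monoms T x)"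
  unfolding tmax_monoms_def image_Un using assms by (intro Max_Un) auto

lemma tmonom_add: "tmonom c a x + tmonom d b x = tmonom (c + d) (\<lambda>i. a i + b i) x"
  by (simp add: tmonom_def sum.distrib distrib_right)

lemma tmax_monoms_add:
  assumes "finite S" "S \<noteq> {}" "finite T" "T \<noteq> {}"
  shows "tmax_monoms S x + tmax_monoms T x
    = tmax_monoms ((\<lambda>((c, a), (d, b)). (c + d, \<lambda>i. a i + b i)) ` (S \<times> T)) x"
proof -
  let ?m = "\<lambda>(c, a). tmonom c a x"
  have "tmax_monoms S x + tmax_monoms T x = Max (?m ` S) + Max (?m ` T)"
    unfolding tmax_monoms_def ..
  also have "\<dots> = Max ((\<lambda>(p, q). ?m p + ?m q) ` (S \<times> T))"
    using Max_image_add_product[OF assms, where f = ?m and g = ?m] by (rule sym)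
  also have "(\<lambda>(p, q). ?m p + ?m q) ` (S \<times> T)
      = ?m ` (\<lambda>((c, a), (d, b)). (c + d, \<lambda>i. a i + b i)) ` (S \<times> T)"
    unfolding image_image by (intro image_cong refl) (auto simp: tmonom_add)
  finally show ?thesis
    unfolding tmax_monoms_def .
qed

lemma tpoly_tadd:
  assumes "f \<in> tpoly" "g \<in> tpoly"
  shows "f \<oplus>\<^sub>t g \<in> tpoly"
  using assms(1)
proof (cases rule: tpoly_cases)
  case 1
  then show ?thesis
    using assms(2) by (simp add: tadd_def)
next
  case (2 S)
  show ?thesis
    using assms(2)
  proof (cases rule: tpoly_cases)
    case 1
    then show ?thesis
      using assms(1) by (simp add: tadd_def)
  next
    case (2 T)
    then have "f \<oplus>\<^sub>t g = tmax_monoms (S \<union> T)"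
      using \<open>finite S\<close> \<open>S \<noteq> {}\<close> \<open>f = tmax_monoms S\<close>
      by (simp add: tadd_def tmax_monoms_Un fun_eq_iff)
    then show ?thesis
      using 2 \<open>finite S\<close> by (simp add: tmax_monoms_in_tpoly)
  qed
qed

lemma tpoly_tmul:
  assumes "f \<in> tpoly" "g \<in> tpoly"
  shows "f \<odot>\<^sub>t g \<in> tpoly"
  using assms(1)
proof (cases rule: tpoly_cases)
  case 1
  then have "f \<odot>\<^sub>t g = (\<lambda>x. -\<infinity>)"
    using tpoly_not_PInf[OF assms(2)] by (simp add: tmul_def fun_eq_iff)
  then show ?thesis
    by (simp add: bot_in_tpoly)
next
  case (2 S)
  show ?thesis
    using assms(2)
  proof (cases rule: tpoly_cases)
    case 1
    then have "f \<odot>\<^sub>t g = (\<lambda>x. -\<infinity>)"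
      using tpoly_not_PInf[OF assms(1)] by (simp add: tmul_def fun_eq_iff)
    then show ?thesis
      by (simp add: bot_in_tpoly)
  next
    case (2 T)
    then show ?thesis
      using \<open>finite S\<close> \<open>S \<noteq> {}\<close> \<open>f = tmax_monoms S\<close>
      by (simp add: tmul_def tmax_monoms_add tmax_monoms_in_tpoly)
  qed
qed

lemma trat_intro:
  assumes "p \<in> tpoly" "q \<in> tpoly" "q \<noteq> (\<lambda>x. -\<infinity>)" "\<And>x. f x = p x - q x"
  shows "f \<in> trat"
  unfolding trat_def using assms by (auto simp: fun_eq_iff)

lemma trat_cases:
  assumes "f \<in> trat"
  obtains p q where "p \<in> tpoly" "q \<in> tpoly" "q \<noteq> (\<lambda>x. -\<infinity>)" "f = (\<lambda>x. p x - q x)"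
  using assms unfolding trat_def by blast

lemma tpoly_in_trat: "f \<in> tpoly \<Longrightarrow> f \<in> trat"
  using const_in_tpoly[of 0]
  by (intro trat_intro[of f "\<lambda>x. 0"]) (simp_all add: zero_ereal_def fun_eq_iff)

lemma trat_not_PInf:
  assumes "f \<in> trat"
  shows "f x \<noteq> \<infinity>"
proof -
  obtain p q where "p \<in> tpoly" "q \<in> tpoly" "q \<noteq> (\<lambda>x. -\<infinity>)" "f = (\<lambda>x. p x - q x)"
    using assms by (rule trat_cases)
  then show ?thesis
    using tpoly_not_PInf[of p x] tpoly_finite[of q x] by (cases "p x"; cases "q x") auto
qed

lemma tpoly_tmul_not_bot:
  assumes "p \<in> tpoly" "q \<in> tpoly" "p \<noteq> (\<lambda>x. -\<infinity>)" "q \<noteq> (\<lambda>x. -\<infinity>)"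
  shows "p \<odot>\<^sub>t q \<noteq> (\<lambda>x. -\<infinity>)"
proof
  fix x :: "real^'a"
  assume "p \<odot>\<^sub>t q = (\<lambda>x. -\<infinity>)"
  then have "p x + q x = -\<infinity>"
    by (simp add: tmul_def fun_eq_iff)
  then show False
    using tpoly_finite[OF assms(1,3), of x] tpoly_finite[OF assms(2,4), of x] by auto
qed

lemma ereal_diff_add_diff:
  fixes a b r s :: ereal
  assumes "a \<noteq> \<infinity>" "b \<noteq> \<infinity>" "\<bar>r\<bar> \<noteq> \<infinity>" "\<bar>s\<bar> \<noteq> \<infinity>"
  shows "(a - r) + (b - s) = (a + b) - (r + s)"
  using assms by (cases a; cases b; cases r; cases s) auto

lemma ereal_max_diff_diff:
  fixes a b r s :: ereal
  assumes "a \<noteq> \<infinity>" "b \<noteq> \<infinity>" "\<bar>r\<bar> \<noteq> \<infinity>" "\<bar>s\<bar> \<noteq> \<infinity>"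
  shows "max (a - r) (b - s) = max (a + s) (b + r) - (r + s)"
  using assms by (cases a; cases b; cases r; cases s) (auto simp: max_def)

lemma trat_tmul_tadd:
  assumes "f \<in> trat" "g \<in> trat"
  shows "f \<odot>\<^sub>t g \<in> trat" "f \<oplus>\<^sub>t g \<in> trat"
proof -
  obtain p1 q1 where
    1: "p1 \<in> tpoly" "q1 \<in> tpoly" "q1 \<noteq> (\<lambda>x. -\<infinity>)" "f = (\<lambda>x. p1 x - q1 x)"
    using assms(1) by (rule trat_cases)
  obtain p2 q2 where
    2: "p2 \<in> tpoly" "q2 \<in> tpoly" "q2 \<noteq> (\<lambda>x. -\<infinity>)" "g = (\<lambda>x. p2 x - q2 x)"
    using assms(2) by (rule trat_cases)
  have finite_values: "p1 x \<noteq> \<infinity>" "p2 x \<noteq> \<infinity>" "\<bar>q1 x\<bar> \<noteq> \<infinity>" "\<bar>q2 x\<bar> \<noteq> \<infinity>" for x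
    using 1 2 by (simp_all add: tpoly_not_PInf tpoly_finite)
  have denom: "q1 \<odot>\<^sub>t q2 \<in> tpoly" "q1 \<odot>\<^sub>t q2 \<noteq> (\<lambda>x. -\<infinity>)"
    using 1 2 by (simp_all add: tpoly_tmul tpoly_tmul_not_bot)
  show "f \<odot>\<^sub>t g \<in> trat"
  proof (rule trat_intro)
    show "p1 \<odot>\<^sub>t p2 \<in> tpoly"
      using 1 2 by (simp add: tpoly_tmul)
    show "(f \<odot>\<^sub>t g) x = (p1 \<odot>\<^sub>t p2) x - (q1 \<odot>\<^sub>t q2) x" for x
      using 1 2 by (simp add: tmul_def ereal_diff_add_diff finite_values)
  qed (fact denom)+
  show "f \<oplus>\<^sub>t g \<in> trat"
  proof (rule trat_intro)
    show "p1 \<odot>\<^sub>t q2 \<oplus>\<^sub>t p2 \<odot>\<^sub>t q1 \<in> tpoly"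
      using 1 2 by (simp add: tpoly_tmul tpoly_tadd)
    show "(f \<oplus>\<^sub>t g) x = (p1 \<odot>\<^sub>t q2 \<oplus>\<^sub>t p2 \<odot>\<^sub>t q1) x - (q1 \<odot>\<^sub>t q2) x" for x
      using 1 2 by (simp add: tmul_def tadd_def ereal_max_diff_diff finite_values)
  qed (fact denom)+
qed

definition eval_kernel :: "real^'n \<Rightarrow> ('n::finite) trel" where
  "eval_kernel x = {(f, g) \<in> trat \<times> trat. f x = g x}"

lemma tcongruence_eval_kernel: "tcongruence (eval_kernel x)"
  unfolding tcongruence_def eval_kernel_def refl_on_def sym_def trans_def
  by (auto simp: trat_tmul_tadd) (simp_all add: tadd_def tmul_def)

lemma tcongruence_subset: "tcongruence C \<Longrightarrow> C \<subseteq> trat \<times> trat"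
  unfolding tcongruence_def by blast

lemma tcong_gen_least: "tcongruence C \<Longrightarrow> R \<subseteq> C \<Longrightarrow> tcong_gen R \<subseteq> C"
  unfolding tcong_gen_def by blast

lemma tcong_gen_upper: "R \<subseteq> tcong_gen R"
  unfolding tcong_gen_def by blast

lemma tV_antimono: "R \<subseteq> S \<Longrightarrow> tV S \<subseteq> tV R"
  unfolding tV_def by blast

lemma tV_UN: "tV (\<Union>l\<in>\<Lambda>. E l) = (\<Inter>l\<in>\<Lambda>. tV (E l))"
  unfolding tV_def by blast

lemma tV_tcong_gen:
  assumes "R \<subseteq> trat \<times> trat"
  shows "tV (tcong_gen R) = tV R"
proof
  show "tV (tcong_gen R) \<subseteq> tV R"
    by (rule tV_antimono[OF tcong_gen_upper])
  show "tV R \<subseteq> tV (tcong_gen R)"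
  proof
    fix x assume "x \<in> tV R"
    then have "R \<subseteq> eval_kernel x"
      using assms by (auto simp: tV_def eval_kernel_def)
    then have "tcong_gen R \<subseteq> eval_kernel x"
      by (rule tcong_gen_least[OF tcongruence_eval_kernel])
    then show "x \<in> tV (tcong_gen R)"
      by (auto simp: tV_def eval_kernel_def)
  qed
qed

lemma max_add_cross_eq_iff:
  fixes u v w z :: ereal
  assumes "u \<noteq> \<infinity>" "v \<noteq> \<infinity>" "w \<noteq> \<infinity>" "z \<noteq> \<infinity>"
  shows "max (u + w) (v + z) = max (u + z) (v + w) \<longleftrightarrow> u = v \<or> w = z"
  using assms by (cases u; cases v; cases w; cases z) (auto simp: max_def)

lemma twist_pairs_subset_trat:
  assumes "F1 \<subseteq> trat \<times> trat" "F2 \<subseteq> trat \<times> trat"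
  shows "{twist a b | a b. a \<in> F1 \<and> b \<in> F2} \<subseteq> trat \<times> trat"
  using assms by (fastforce simp: twist_def intro!: trat_tmul_tadd)

lemma tV_twist_pairs:
  assumes "F1 \<subseteq> trat \<times> trat" "F2 \<subseteq> trat \<times> trat"
  shows "tV {twist a b | a b. a \<in> F1 \<and> b \<in> F2} = tV F1 \<union> tV F2"
proof -
  have tV_fst_snd: "tV R = {x. \<forall>p\<in>R. fst p x = snd p x}" for R :: "'a trel"
    by (simp add: tV_def case_prod_beta)
  have "fst (twist a b) x = snd (twist a b) x \<longleftrightarrow> fst a x = snd a x \<or> fst b x = snd b x"
    if "a \<in> F1" "b \<in> F2" for a b x
  proof -
    have "fst a \<in> trat" "snd a \<in> trat" "fst b \<in> trat" "snd b \<in> trat"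
      using that assms by (auto simp: mem_Times_iff)
    then have "fst a x \<noteq> \<infinity>" "snd a x \<noteq> \<infinity>" "fst b x \<noteq> \<infinity>" "snd b x \<noteq> \<infinity>"
      by (simp_all add: trat_not_PInf)
    then show ?thesis
      by (simp add: twist_def tadd_def tmul_def case_prod_beta max_add_cross_eq_iff)
  qed
  then show ?thesis
    unfolding tV_fst_snd by blast
qed

theorem proposition3p8:
  fixes \<Lambda> :: "'l set" and E :: "'l \<Rightarrow> ('n::finite) trel" and F1 F2 :: "'n trel"
  assumes "\<forall>l\<in>\<Lambda>. tcongruence (E l)"
    and "tcongruence F1" and "tcongruence F2"
  shows "tV (Id_on (trat :: 'n tfun set)) = UNIV
    \<and> tV ((trat :: 'n tfun set) \<times> trat) = {}
    \<and> tV (tcong_gen (\<Union>l\<in>\<Lambda>. E l)) = (\<Inter>l\<in>\<Lambda>. tV (E l))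
    \<and> tV (twisted_prod F1 F2) = tV F1 \<union> tV F2"
proof (intro conjI)
  show "tV (Id_on (trat :: 'n tfun set)) = UNIV"
    by (auto simp: tV_def)
  have "(\<lambda>x. 0, \<lambda>x. -\<infinity>) \<in> (trat :: 'n tfun set) \<times> trat"
    using const_in_tpoly[of 0] bot_in_tpoly unfolding zero_ereal_def
    by (blast intro: tpoly_in_trat)
  then have "tV ((trat :: 'n tfun set) \<times> trat) \<subseteq> tV {(\<lambda>x. 0, \<lambda>x. -\<infinity>)}"
    by (intro tV_antimono) simp
  then show "tV ((trat :: 'n tfun set) \<times> trat) = {}"
    by (simp add: tV_def)
  have "(\<Union>l\<in>\<Lambda>. E l) \<subseteq> trat \<times> trat"
    using assms(1) by (auto dest: tcongruence_subset)
  then show "tV (tcong_gen (\<Union>l\<in>\<Lambda>. E l)) = (\<Inter>l\<in>\<Lambda>. tV (E l))"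
    by (simp add: tV_tcong_gen tV_UN)
  have F: "F1 \<subseteq> trat \<times> trat" "F2 \<subseteq> trat \<times> trat"
    using assms(2,3) by (simp_all add: tcongruence_subset)
  have "tV (twisted_prod F1 F2) = tV {twist a b | a b. a \<in> F1 \<and> b \<in> F2}"
    unfolding twisted_prod_def using F by (intro tV_tcong_gen twist_pairs_subset_trat)
  also have "\<dots> = tV F1 \<union> tV F2"
    using F by (rule tV_twist_pairs)
  finally show "tV (twisted_prod F1 F2) = tV F1 \<union> tV F2" .
qed

end
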